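(* Let $B$ be a finite Blaschke product of degree $n=p_1p_2\cdots p_m$ (with integers $p_i\ge 2$) having exactly one critical value. Then for every permutation $\sigma$ of $\{1,\dots,m\}$ there exist finite Blaschke products $B_1,\dots,B_m$ with $\deg B_j=p_{\sigma(j)}$ such that $B=B_1\circ B_2\circ\cdots\circ B_m$.
   Context: A finite Blaschke product of degree $d$ is $B(z)=\gamma\prod_{j=1}^d \frac{z-a_j}{1-\overline{a_j}z}$ with $a_j\in\mathbb{D}$ and $|\gamma|=1$. The set of critical values of $B$ is $\{w\in\mathbb{D}: w=B(z)\text{ for some } z\in\mathbb{D} \text{ with } B'(z)=0\}$. *)

theory Defs
  imports "HOL-Analysis.Analysis" "HOL-Combinatorics.Permutations"
begin

definition blaschke :: "complex \<Rightarrow> complex list \<Rightarrow> complex \<Rightarrow> complex" where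
  "blaschke \<gamma> as z = \<gamma> * (\<Prod>a\<leftarrow>as. (z - a) / (1 - cnj a * z))"

definition is_blaschke :: "(complex \<Rightarrow> complex) \<Rightarrow> nat \<Rightarrow> bool" where
  "is_blaschke B d \<longleftrightarrow> (\<exists>\<gamma> as. norm \<gamma> = 1 \<and> length as = d \<and> set as \<subseteq> ball 0 1 \<and>
      (\<forall>z\<in>ball 0 1. B z = blaschke \<gamma> as z))"

definition critical_values :: "(complex \<Rightarrow> complex) \<Rightarrow> complex set" where
  "critical_values B = {w \<in> ball 0 1. \<exists>z\<in>ball 0 1. deriv B z = 0 \<and> w = B z}"

definition compose_list :: "(complex \<Rightarrow> complex) list \<Rightarrow> complex \<Rightarrow> complex" where
  "compose_list fs = foldr (\<circ>) fs id"

end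

theory Submission
  imports Defs "HOL-Complex_Analysis.Riemann_Mapping"
    "HOL-Computational_Algebra.Fundamental_Theorem_Algebra"
begin

text \<open>Let \<open>w\<close> be the critical value and \<open>n = (\<Prod>i<m. p i)\<close> the degree of \<open>B\<close>.
  Composing \<open>B\<close> with the disc automorphism \<open>u \<mapsto> (u - w) / (1 - cnj w * u)\<close> gives a
  Blaschke product \<open>G\<close> of degree \<open>n\<close> whose critical points in the disc are all zeros of \<open>G\<close>.
  Such a \<open>G\<close> has a single distinct zero. Clearing denominators in the logarithmic derivative
  \<open>G'/G = (\<Sum>a. (1 - norm a^2) / ((z - a) * (1 - cnj a * z)))\<close> gives a polynomial \<open>R\<close> that
  does not vanish at the zeros of \<open>G\<close>, nor elsewhere in the disc (there are no other critical
  points), nor on the unit circle (where \<open>z * G'/G\<close> is a positive real), nor outside the closed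
  disc, because \<open>R z = z^k * cnj (R (1 / cnj z))\<close> with \<open>k = 2 * (d - 1)\<close> for \<open>d\<close> distinct
  zeros. So \<open>R\<close> is constant, which forces \<open>k = 0\<close>.
  Hence \<open>B\<close> is the inverse automorphism applied to \<open>\<gamma> * b\<^sub>a^n\<close> for a single Blaschke factor
  \<open>b\<^sub>a\<close>, and \<open>u^n\<close> is the composition of the powers \<open>u^(p (\<sigma> j))\<close> in any order; the outer
  automorphism is absorbed into the first factor and \<open>b\<^sub>a\<close> into the last. For \<open>m = 0\<close> the
  degree is 1 and \<open>B\<close> has no critical points at all.\<close>

section \<open>Blaschke factors\<close>

definition blaschke_factor :: "complex \<Rightarrow> complex \<Rightarrow> complex" where
  "blaschke_factor a z = (z - a) / (1 - cnj a * z)"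

lemma blaschke_factor_eq_Moebius_function: "blaschke_factor a = Moebius_function 0 a"
  by (simp add: fun_eq_iff blaschke_factor_def Moebius_function_simple)

lemma blaschke_Nil: "blaschke g [] = (\<lambda>_. g)"
  by (simp add: fun_eq_iff blaschke_def)

lemma blaschke_Cons: "blaschke g (a # as) z = blaschke_factor a z * blaschke g as z"
  by (simp add: blaschke_def blaschke_factor_def mult_ac)

lemma blaschke_replicate: "blaschke g (replicate n a) z = g * blaschke_factor a z ^ n"
  by (simp add: blaschke_def blaschke_factor_def map_replicate_const prod_list_replicate)

lemma norm_blaschke_factor_identity:
  "norm (1 - cnj a * z)^2 - norm (z - a)^2 = (1 - norm a^2) * (1 - norm z^2)"
proof -
  have "complex_of_real (norm (1 - cnj a * z)^2 - norm (z - a)^2)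
      = complex_of_real ((1 - norm a^2) * (1 - norm z^2))"
    by (simp only: of_real_diff of_real_mult of_real_1 complex_norm_square complex_cnj_diff
        complex_cnj_mult complex_cnj_cnj complex_cnj_one) (simp add: algebra_simps)
  then show ?thesis
    using of_real_eq_iff by blast
qed

lemma blaschke_factor_denom_nonzero:
  assumes "norm a < 1" "norm z \<le> 1"
  shows "1 - cnj a * z \<noteq> 0"
proof -
  have "norm a * norm z \<le> norm a"
    using assms by (simp add: mult_left_le)
  then have "norm (cnj a * z) < 1"
    using assms by (simp add: norm_mult)
  then show ?thesis
    by auto
qed

lemma norm_blaschke_factor_denom_le:
  assumes "norm a < 1" "1 \<le> norm z"
  shows "norm (1 - cnj a * z) \<le> norm (z - a)"
proof -
  have "(1 - norm a^2) * (1 - norm z^2) \<le> 0"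
  proof (rule mult_nonneg_nonpos)
    show "0 \<le> 1 - norm a^2"
      using power_mono[of "norm a" 1 2] assms(1) by simp
    show "1 - norm z^2 \<le> 0"
      using one_le_power[OF assms(2), of 2] by simp
  qed
  then have "norm (1 - cnj a * z)^2 \<le> norm (z - a)^2"
    using norm_blaschke_factor_identity[of a z] by linarith
  then show ?thesis
    by (rule power2_le_imp_le) simp
qed

lemma one_minus_cnj_mult_self: "1 - cnj a * a = of_real (1 - norm a^2)"
  using complex_norm_square[of a] by (simp add: mult.commute)

lemma one_minus_cnj_mult_self_nonzero:
  assumes "norm a < 1"
  shows "1 - cnj a * a \<noteq> 0"
proof -
  have "norm (cnj a * a) < 1"
    using assms by (simp add: norm_mult abs_square_less_1 power2_eq_square[symmetric])
  then show ?thesis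
    by auto
qed

lemma norm_blaschke_factor_less_1:
  "norm a < 1 \<Longrightarrow> norm z < 1 \<Longrightarrow> norm (blaschke_factor a z) < 1"
  by (simp add: blaschke_factor_eq_Moebius_function Moebius_function_norm_lt_1)

lemma blaschke_factor_inverse:
  "norm c < 1 \<Longrightarrow> norm w < 1 \<Longrightarrow> blaschke_factor (- c) (blaschke_factor c w) = w"
  by (simp add: blaschke_factor_eq_Moebius_function Moebius_function_compose)

lemma has_field_derivative_blaschke_factor:
  assumes "1 - cnj a * z \<noteq> 0"
  shows "(blaschke_factor a has_field_derivative (1 - cnj a * a) / (1 - cnj a * z)^2) (at z)"
proof -
  have "((\<lambda>z. (z - a) / (1 - cnj a * z)) has_field_derivative
      (1 * (1 - cnj a * z) - (z - a) * (- cnj a)) / ((1 - cnj a * z) * (1 - cnj a * z))) (at z)"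
    using assms by (intro DERIV_divide) (auto intro!: derivative_eq_intros)
  then show ?thesis
    unfolding blaschke_factor_def by (simp add: power2_eq_square algebra_simps)
qed

lemma blaschke_factor_deriv_nonzero:
  "norm a < 1 \<Longrightarrow> norm z \<le> 1 \<Longrightarrow> (1 - cnj a * a) / (1 - cnj a * z)^2 \<noteq> 0"
  using one_minus_cnj_mult_self_nonzero blaschke_factor_denom_nonzero by simp

lemma norm_blaschke_le_1:
  assumes "norm g = 1" "set as \<subseteq> ball 0 1" "norm z < 1"
  shows "norm (blaschke g as z) \<le> 1"
  using assms(2)
proof (induction as)
  case (Cons a as)
  then show ?case
    using norm_blaschke_factor_less_1[of a z] assms(3)
    by (auto simp: blaschke_Cons norm_mult intro!: mult_le_one)
qed (simp add: blaschke_def assms(1))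

lemma norm_blaschke_less_1:
  assumes "norm g = 1" "set as \<subseteq> ball 0 1" "as \<noteq> []" "norm z < 1"
  shows "norm (blaschke g as z) < 1"
proof -
  obtain a bs where as: "as = a # bs"
    using assms(3) by (cases as) auto
  have "norm (blaschke_factor a z) < 1" "norm (blaschke g bs z) \<le> 1"
    using assms norm_blaschke_factor_less_1[of a z] norm_blaschke_le_1[of g bs z] by (auto simp: as)
  then have "norm (blaschke_factor a z) * norm (blaschke g bs z) < 1"
    by (meson le_less_trans mult_left_le norm_ge_zero)
  then show ?thesis
    by (simp add: as blaschke_Cons norm_mult)
qed

lemma blaschke_holomorphic: "set as \<subseteq> ball 0 1 \<Longrightarrow> blaschke g as holomorphic_on ball 0 1"
proof (induction as)
  case (Cons a as)
  have "blaschke_factor a holomorphic_on ball 0 1"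
    using Cons.prems by (simp add: blaschke_factor_eq_Moebius_function Moebius_function_holomorphic)
  then show ?case
    using Cons by (simp add: blaschke_Cons holomorphic_on_mult)
qed (simp add: blaschke_Nil)

section \<open>The critical polynomial of a Blaschke product\<close>

lemma blaschke_nonzero:
  assumes "g \<noteq> 0" "set as \<subseteq> ball 0 1" "norm z < 1" "z \<notin> set as"
  shows "blaschke g as z \<noteq> 0"
  using assms blaschke_factor_denom_nonzero[of _ z]
  by (auto simp: blaschke_def prod_list_zero_iff)

definition blaschke_logderiv :: "complex list \<Rightarrow> complex \<Rightarrow> complex" where
  "blaschke_logderiv as z = (\<Sum>a\<leftarrow>as. (1 - cnj a * a) / ((z - a) * (1 - cnj a * z)))"

lemma has_field_derivative_blaschke:
  assumes "set as \<subseteq> ball 0 1" "norm z < 1" "z \<notin> set as"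
  shows "(blaschke g as has_field_derivative blaschke g as z * blaschke_logderiv as z) (at z)"
  using assms(1,3)
proof (induction as)
  case Nil
  then show ?case
    by (simp add: blaschke_Nil blaschke_logderiv_def)
next
  case (Cons a as)
  have nz: "1 - cnj a * z \<noteq> 0" "z - a \<noteq> 0"
    using Cons.prems assms(2) blaschke_factor_denom_nonzero[of a z] by auto
  define t where "t = (1 - cnj a * a) / ((z - a) * (1 - cnj a * z))"
  have "(1 - cnj a * a) / (1 - cnj a * z)^2 = blaschke_factor a z * t"
    using nz by (simp add: blaschke_factor_def t_def power2_eq_square)
  moreover have "((\<lambda>z. blaschke_factor a z * blaschke g as z) has_field_derivative
      blaschke_factor a z * (blaschke g as z * blaschke_logderiv as z)
      + (1 - cnj a * a) / (1 - cnj a * z)^2 * blaschke g as z) (at z)"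
    using Cons nz by (intro DERIV_mult' has_field_derivative_blaschke_factor) auto
  ultimately have "((\<lambda>z. blaschke_factor a z * blaschke g as z) has_field_derivative
      blaschke_factor a z * blaschke g as z * (t + blaschke_logderiv as z)) (at z)"
    by (simp add: algebra_simps)
  moreover have "blaschke_logderiv (a # as) z = t + blaschke_logderiv as z"
    by (simp add: blaschke_logderiv_def t_def)
  moreover have "blaschke g (a # as) = (\<lambda>z. blaschke_factor a z * blaschke g as z)"
    by (simp add: fun_eq_iff blaschke_Cons)
  ultimately show ?case
    by (simp add: blaschke_Cons)
qed

lemma poly_sum_list_map: "poly (\<Sum>x\<leftarrow>xs. f x) z = (\<Sum>x\<leftarrow>xs. poly (f x) z)"
  by (induction xs) auto

text \<open>The logarithmic derivative times \<open>\<Prod>b\<in>set as. (z - b) * (1 - cnj b * z)\<close>; repeated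
  zeros are weighted by the sum over the list.\<close>

definition blaschke_critical_poly :: "complex list \<Rightarrow> complex poly" where
  "blaschke_critical_poly as =
     (\<Sum>a\<leftarrow>as. smult (1 - cnj a * a) (\<Prod>b\<in>set as - {a}. [:- b, 1:] * [:1, - cnj b:]))"

lemma poly_blaschke_critical_poly:
  "poly (blaschke_critical_poly as) z =
     (\<Sum>a\<leftarrow>as. (1 - cnj a * a) * (\<Prod>b\<in>set as - {a}. (z - b) * (1 - cnj b * z)))"
proof -
  have "poly ([:- b, 1:] * [:1, - cnj b:]) z = (z - b) * (1 - cnj b * z)" for b
    by (simp add: algebra_simps)
  then show ?thesis
    by (simp only: blaschke_critical_poly_def poly_sum_list_map poly_smult poly_prod)
qed

lemma blaschke_critical_poly_eq_0_iff:
  assumes "z \<notin> set as" "\<And>b. b \<in> set as \<Longrightarrow> 1 - cnj b * z \<noteq> 0"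
  shows "poly (blaschke_critical_poly as) z = 0 \<longleftrightarrow> blaschke_logderiv as z = 0"
proof -
  let ?f = "\<lambda>b. (z - b) * (1 - cnj b * z)"
  have f_nonzero: "?f b \<noteq> 0" if "b \<in> set as" for b
    using assms that by auto
  have "(1 - cnj a * a) * (\<Prod>b\<in>set as - {a}. ?f b) = (1 - cnj a * a) / ?f a * (\<Prod>b\<in>set as. ?f b)"
    if "a \<in> set as" for a
    using that f_nonzero[OF that] prod.remove[of "set as" a ?f] by simp
  then have "poly (blaschke_critical_poly as) z = blaschke_logderiv as z * (\<Prod>b\<in>set as. ?f b)"
    unfolding poly_blaschke_critical_poly blaschke_logderiv_def sum_list_mult_const[symmetric]
    by (intro arg_cong[where f = sum_list] map_cong) auto
  moreover have "(\<Prod>b\<in>set as. ?f b) \<noteq> 0"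
    using f_nonzero by simp
  ultimately show ?thesis
    by simp
qed

lemma sum_list_if_eq_count_list:
  "(\<Sum>x\<leftarrow>xs. if x = a then c else 0) = of_nat (count_list xs a) * (c :: 'a :: semiring_1)"
  by (induction xs) (auto simp: algebra_simps)

lemma blaschke_critical_poly_nonzero_at_roots:
  assumes "set as \<subseteq> ball 0 1" "a \<in> set as"
  shows "poly (blaschke_critical_poly as) a \<noteq> 0"
proof -
  define c where "c = (1 - cnj a * a) * (\<Prod>b\<in>set as - {a}. (a - b) * (1 - cnj b * a))"
  have "(1 - cnj x * x) * (\<Prod>b\<in>set as - {x}. (a - b) * (1 - cnj b * a)) = (if x = a then c else 0)"
    if "x \<in> set as" for x
    using assms(2) by (auto simp: c_def)
  then have "poly (blaschke_critical_poly as) a = of_nat (count_list as a) * c"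
    unfolding poly_blaschke_critical_poly sum_list_if_eq_count_list[symmetric]
    by (intro arg_cong[where f = sum_list] map_cong) auto
  moreover have "count_list as a \<noteq> 0"
    using assms(2) by (simp add: count_list_0_iff)
  moreover have "norm b < 1" if "b \<in> set as" for b
    using assms(1) that by auto
  then have "c \<noteq> 0"
    using assms(2) one_minus_cnj_mult_self_nonzero[of a] blaschke_factor_denom_nonzero[of _ a]
    by (force simp: c_def)
  ultimately show ?thesis
    by simp
qed

lemma blaschke_logderiv_unit_circle:
  assumes "norm z = 1" "z \<notin> set as"
  shows "z * blaschke_logderiv as z = of_real (\<Sum>a\<leftarrow>as. (1 - norm a^2) / norm (z - a)^2)"
proof -
  have "z * ((1 - cnj a * a) / ((z - a) * (1 - cnj a * z))) = of_real ((1 - norm a^2) / norm (z - a)^2)"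
    if "a \<in> set as" for a
  proof -
    have "z * cnj z = 1"
      using assms(1) complex_norm_square[of z] by simp
    then have "1 - cnj a * z = z * cnj (z - a)"
      by (simp add: algebra_simps)
    moreover have "z \<noteq> 0"
      using assms(1) by auto
    ultimately have "z * ((1 - cnj a * a) / ((z - a) * (1 - cnj a * z)))
        = (1 - cnj a * a) / ((z - a) * cnj (z - a))"
      by (simp only: mult.left_commute[of "z - a"] times_divide_eq_right
          mult_divide_mult_cancel_left not_False_eq_True)
    also have "\<dots> = of_real (1 - norm a^2) / of_real (norm (z - a)^2)"
      by (simp only: one_minus_cnj_mult_self complex_norm_square)
    finally show ?thesis
      by simp
  qed
  then have "z * blaschke_logderiv as z = (\<Sum>a\<leftarrow>as. of_real ((1 - norm a^2) / norm (z - a)^2))"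
    unfolding blaschke_logderiv_def sum_list_const_mult[symmetric]
    by (intro arg_cong[where f = sum_list] map_cong) auto
  then show ?thesis
    using sum_list_of_real[where 'a = complex, of "map (\<lambda>a. (1 - norm a^2) / norm (z - a)^2) as"]
    by (simp only: map_map o_def)
qed

lemma blaschke_logderiv_unit_circle_nonzero:
  assumes "norm z = 1" "set as \<subseteq> ball 0 1" "as \<noteq> []"
  shows "blaschke_logderiv as z \<noteq> 0"
proof -
  obtain a as' where as: "as = a # as'"
    using assms(3) by (cases as) auto
  have "z \<notin> set as"
    using assms by auto
  have pos: "0 < (1 - norm b^2) / norm (z - b)^2" if "b \<in> set as" for b
  proof -
    have "norm b < 1" "z \<noteq> b"
      using assms that by auto
    then show ?thesis
      using power_strict_mono[of "norm b" 1 2] by simp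
  qed
  have "0 \<le> (\<Sum>b\<leftarrow>as'. (1 - norm b^2) / norm (z - b)^2)"
    using pos by (intro sum_list_nonneg) (auto simp: as less_imp_le)
  then have "0 < (\<Sum>b\<leftarrow>as. (1 - norm b^2) / norm (z - b)^2)"
    using pos[of a] by (simp add: as)
  then show ?thesis
    using blaschke_logderiv_unit_circle[OF assms(1) \<open>z \<notin> set as\<close>] by auto
qed

lemma cnj_sum_list: "cnj (\<Sum>x\<leftarrow>xs. f x) = (\<Sum>x\<leftarrow>xs. cnj (f x))"
  by (induction xs) auto

lemma blaschke_critical_poly_reflect:
  assumes "z \<noteq> 0"
  shows "poly (blaschke_critical_poly as) z =
    z ^ (2 * (card (set as) - 1)) * cnj (poly (blaschke_critical_poly as) (inverse (cnj z)))"
proof -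
  define w where "w = inverse (cnj z)"
  have factor: "z^2 * cnj ((w - b) * (1 - cnj b * w)) = (z - b) * (1 - cnj b * z)" for b
    using assms by (simp add: w_def field_simps power2_eq_square)
  have "z ^ (2 * (card (set as) - 1)) * cnj ((1 - cnj a * a) * (\<Prod>b\<in>set as - {a}. (w - b) * (1 - cnj b * w)))
      = (1 - cnj a * a) * (\<Prod>b\<in>set as - {a}. (z - b) * (1 - cnj b * z))"
    if "a \<in> set as" for a
  proof -
    have "z ^ (2 * (card (set as) - 1)) = (\<Prod>b\<in>set as - {a}. z^2)"
      using that by (simp add: power_mult)
    then have "z ^ (2 * (card (set as) - 1)) * cnj (\<Prod>b\<in>set as - {a}. (w - b) * (1 - cnj b * w))
        = (\<Prod>b\<in>set as - {a}. (z - b) * (1 - cnj b * z))"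
      by (simp only: factor cnj_prod prod.distrib[symmetric])
    moreover have "cnj (1 - cnj a * a) = 1 - cnj a * a"
      by (simp add: mult.commute)
    ultimately show ?thesis
      by (simp only: complex_cnj_mult mult.left_commute)
  qed
  then show ?thesis
    unfolding poly_blaschke_critical_poly cnj_sum_list sum_list_const_mult[symmetric] w_def[symmetric]
    by (intro arg_cong[where f = sum_list] map_cong) auto
qed

lemma blaschke_critical_poly_nonzero:
  assumes "set as \<subseteq> ball 0 1" "as \<noteq> []"
    and "\<And>z. z \<in> ball 0 1 - set as \<Longrightarrow> blaschke_logderiv as z \<noteq> 0"
  shows "poly (blaschke_critical_poly as) z \<noteq> 0"
proof -
  have closed_disc: "poly (blaschke_critical_poly as) z \<noteq> 0" if "norm z \<le> 1" for z
  proof (cases "z \<in> set as")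
    case True
    then show ?thesis
      using assms(1) blaschke_critical_poly_nonzero_at_roots by blast
  next
    case False
    have "blaschke_logderiv as z \<noteq> 0"
      using that False assms blaschke_logderiv_unit_circle_nonzero[of z as]
      by (cases "norm z = 1") auto
    moreover have "1 - cnj b * z \<noteq> 0" if "b \<in> set as" for b
      using that assms(1) \<open>norm z \<le> 1\<close> blaschke_factor_denom_nonzero[of b z] by auto
    ultimately show ?thesis
      using blaschke_critical_poly_eq_0_iff[OF False] by blast
  qed
  show ?thesis
  proof (cases "norm z \<le> 1")
    case False
    then have "z \<noteq> 0" "norm (inverse (cnj z)) \<le> 1"
      by (auto simp: norm_inverse inverse_le_1_iff)
    then show ?thesis
      using closed_disc blaschke_critical_poly_reflect[of z as] by auto
  qed (rule closed_disc)
qed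

lemma card_set_eq_1_if_critical_poly_nonzero:
  assumes "as \<noteq> []" "\<And>z. poly (blaschke_critical_poly as) z \<noteq> 0"
  shows "card (set as) = 1"
proof -
  let ?R = "poly (blaschke_critical_poly as)" and ?k = "2 * (card (set as) - 1)"
  have "constant ?R"
    using fundamental_theorem_of_algebra assms(2) by blast
  then obtain c where c: "\<And>z. ?R z = c"
    unfolding constant_def by blast
  have "c = 2 ^ ?k * cnj c" "c = cnj c"
    using blaschke_critical_poly_reflect[of 2 as] blaschke_critical_poly_reflect[of 1 as]
    by (simp_all only: c) simp_all
  moreover have "c \<noteq> 0"
    using assms(2) c by metis
  ultimately have "(2 :: complex) ^ ?k = 1"
    by (metis mult_cancel_right1)
  then have "(of_nat (2 ^ ?k) :: complex) = of_nat 1"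
    by simp
  then have "?k = 0"
    by (simp only: of_nat_eq_iff power_eq_1_iff) simp
  moreover have "card (set as) \<noteq> 0"
    using assms(1) by simp
  ultimately show ?thesis
    by linarith
qed

lemma blaschke_replicate_if_critical_points_are_zeros:
  assumes "set as \<subseteq> ball 0 1" "g \<noteq> 0"
    and "\<And>z. z \<in> ball 0 1 \<Longrightarrow> deriv (blaschke g as) z = 0 \<Longrightarrow> blaschke g as z = 0"
  obtains a where "as = replicate (length as) a"
proof (cases "as = []")
  case False
  have "blaschke_logderiv as z \<noteq> 0" if z: "z \<in> ball 0 1 - set as" for z
  proof
    assume "blaschke_logderiv as z = 0"
    then have "(blaschke g as has_field_derivative 0) (at z)"
      using z assms(1) has_field_derivative_blaschke[of as z g] by simp
    then have "deriv (blaschke g as) z = 0"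
      by (rule DERIV_imp_deriv)
    then show False
      using z assms blaschke_nonzero[of g as z] by auto
  qed
  then have "card (set as) = 1"
    using False assms(1) by (intro card_set_eq_1_if_critical_poly_nonzero blaschke_critical_poly_nonzero)
  then obtain a where "set as = {a}"
    using card_1_singletonE by blast
  then show ?thesis
    by (intro that[of a] replicate_eqI) auto
qed simp

section \<open>Composing a Blaschke product with a disc automorphism\<close>

lemma poly_prod_list_linear: "poly (\<Prod>x\<leftarrow>xs. [:u x, v x:]) z = (\<Prod>x\<leftarrow>xs. u x + v x * z)"
  by (induction xs) (auto simp: algebra_simps)

lemma degree_prod_list_linear: "degree (\<Prod>x\<leftarrow>xs. [:u x, v x:]) \<le> length xs"
proof (induction xs)
  case (Cons x xs)
  have "degree [:u x, v x:] \<le> 1"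
    by simp
  then show ?case
    using Cons degree_mult_le[of "[:u x, v x:]" "\<Prod>x\<leftarrow>xs. [:u x, v x:]"]
    by (simp del: mult_pCons_left)
qed simp

lemma coeff_prod_list_linear: "coeff (\<Prod>x\<leftarrow>xs. [:u x, v x:]) (length xs) = (\<Prod>x\<leftarrow>xs. v x)"
proof (induction xs)
  case (Cons x xs)
  let ?P = "\<Prod>x\<leftarrow>xs. [:u x, v x:]"
  have "coeff ?P (Suc (length xs)) = 0"
    using degree_prod_list_linear[of u v xs] by (intro coeff_eq_0) simp
  then show ?case
    using Cons.IH by simp
qed simp

lemma complex_poly_linear_factors:
  fixes p :: "complex poly"
  obtains rs where "length rs = degree p" "\<And>z. poly p z = lead_coeff p * (\<Prod>r\<leftarrow>rs. z - r)"
proof -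
  obtain rs where rs: "mset rs = proots p"
    using ex_mset by blast
  have "(\<Prod>x\<in>#mset rs. [:- x, 1:]) = (\<Prod>x\<leftarrow>rs. [:- x, 1:])"
    by (metis mset_map prod_mset_prod_list)
  then have "p = smult (lead_coeff p) (\<Prod>x\<leftarrow>rs. [:- x, 1:])"
    using complex_poly_decompose_multiset[of p] by (simp add: rs)
  moreover have "poly (\<Prod>x\<leftarrow>rs. [:- x, 1:]) z = (\<Prod>r\<leftarrow>rs. z - r)" for z
    using poly_prod_list_linear[of uminus "\<lambda>_. 1" rs z] by simp
  ultimately have "poly p z = lead_coeff p * (\<Prod>r\<leftarrow>rs. z - r)" for z
    by (metis poly_smult)
  moreover have "length rs = degree p"
    using size_proots_complex[of p] by (metis rs size_mset)
  ultimately show ?thesis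
    using that by blast
qed

lemma norm_prod_list_le:
  fixes f h :: "'a \<Rightarrow> complex"
  assumes "\<And>x. x \<in> set xs \<Longrightarrow> norm (f x) \<le> norm (h x)"
  shows "norm (\<Prod>x\<leftarrow>xs. f x) \<le> norm (\<Prod>x\<leftarrow>xs. h x)"
  using assms by (induction xs) (auto simp: norm_mult intro!: mult_mono)

text \<open>With \<open>N z = (\<Prod>a\<leftarrow>as. z - a)\<close> and \<open>D z = (\<Prod>a\<leftarrow>as. 1 - cnj a * z)\<close> we have
  \<open>blaschke g as = g * N / D\<close>, so composing with \<open>blaschke_factor c\<close> gives
  \<open>(g * N - c * D) / (D - g * cnj c * N)\<close>. The numerator is a polynomial of exact degree
  \<open>length as\<close> with all its roots in the disc, and the denominator is its reflection
  \<open>z^n * cnj (\<dots> (1 / cnj z))\<close>.\<close>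

lemma moebius_numerator_root_in_disc:
  assumes "norm g = 1" "norm c < 1" "set as \<subseteq> ball 0 1"
    and "g * (\<Prod>a\<leftarrow>as. r - a) = c * (\<Prod>a\<leftarrow>as. 1 - cnj a * r)"
  shows "norm r < 1"
proof (rule ccontr)
  assume "\<not> norm r < 1"
  then have r: "1 \<le> norm r"
    by simp
  define N where "N = norm (\<Prod>a\<leftarrow>as. r - a)"
  have "norm (\<Prod>a\<leftarrow>as. 1 - cnj a * r) \<le> N"
    unfolding N_def using assms(3) r by (intro norm_prod_list_le norm_blaschke_factor_denom_le) auto
  moreover have "N = norm c * norm (\<Prod>a\<leftarrow>as. 1 - cnj a * r)"
    unfolding N_def using arg_cong[OF assms(4), of norm] assms(1) by (simp add: norm_mult)
  ultimately have "N \<le> norm c * N"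
    by (simp add: mult_left_mono)
  moreover have "0 < N"
    unfolding N_def using assms(3) r by (auto simp: prod_list_zero_iff)
  ultimately show False
    using assms(2) by (simp add: mult_le_cancel_right1)
qed

lemma moebius_lead_coeff_nonzero:
  assumes "norm g = 1" "norm c < 1" "set as \<subseteq> ball 0 1"
  shows "g - c * (\<Prod>a\<leftarrow>as. - cnj a) \<noteq> 0"
proof -
  have "norm (\<Prod>a\<leftarrow>as. - cnj a) \<le> norm (\<Prod>a\<leftarrow>as. 1 :: complex)"
    using assms(3) by (intro norm_prod_list_le) auto
  then have "norm c * norm (\<Prod>a\<leftarrow>as. - cnj a) \<le> norm c"
    by (simp add: map_replicate_const mult_left_le)
  then have "norm (c * (\<Prod>a\<leftarrow>as. - cnj a)) < 1"
    using assms(2) by (simp add: norm_mult)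
  then show ?thesis
    using assms(1) by auto
qed

lemma moebius_numerator_factors:
  assumes "norm g = 1" "norm c < 1" "set as \<subseteq> ball 0 1"
  obtains rs where "length rs = length as" "set rs \<subseteq> ball 0 1"
    "\<And>z. g * (\<Prod>a\<leftarrow>as. z - a) - c * (\<Prod>a\<leftarrow>as. 1 - cnj a * z)
       = (g - c * (\<Prod>a\<leftarrow>as. - cnj a)) * (\<Prod>r\<leftarrow>rs. z - r)"
proof -
  define P where "P = smult g (\<Prod>a\<leftarrow>as. [:- a, 1:]) - smult c (\<Prod>a\<leftarrow>as. [:1, - cnj a:])"
  define l where "l = g - c * (\<Prod>a\<leftarrow>as. - cnj a)"
  have poly_P: "poly P z = g * (\<Prod>a\<leftarrow>as. z - a) - c * (\<Prod>a\<leftarrow>as. 1 - cnj a * z)" for z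
    unfolding P_def by (simp add: poly_prod_list_linear[of uminus "\<lambda>_. 1"]
        poly_prod_list_linear[of "\<lambda>_. 1" "\<lambda>a. - cnj a"] algebra_simps)
  have "l \<noteq> 0"
    unfolding l_def using assms by (rule moebius_lead_coeff_nonzero)
  have "degree P \<le> length as"
    unfolding P_def
    using degree_prod_list_linear[of uminus "\<lambda>_. 1" as]
      degree_prod_list_linear[of "\<lambda>_. 1" "\<lambda>a. - cnj a" as]
    by (intro degree_diff_le order.trans[OF degree_smult_le]) auto
  moreover have "coeff P (length as) = l"
    unfolding P_def l_def using coeff_prod_list_linear[of uminus "\<lambda>_. 1" as]
      coeff_prod_list_linear[of "\<lambda>_. 1" "\<lambda>a. - cnj a" as] by (simp add: map_replicate_const)
  ultimately have "degree P = length as" "lead_coeff P = l"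
    using \<open>l \<noteq> 0\<close> le_degree[of P "length as"] by auto
  then obtain rs where rs: "length rs = length as" "\<And>z. poly P z = l * (\<Prod>r\<leftarrow>rs. z - r)"
    using complex_poly_linear_factors[of P] by metis
  have "norm r < 1" if "r \<in> set rs" for r
  proof (rule moebius_numerator_root_in_disc[OF assms])
    have "poly P r = 0"
      using rs(2)[of r] that by (auto simp: prod_list_zero_iff)
    then show "g * (\<Prod>a\<leftarrow>as. r - a) = c * (\<Prod>a\<leftarrow>as. 1 - cnj a * r)"
      by (simp add: poly_P)
  qed
  then show ?thesis
    using rs poly_P by (intro that[of rs]) (auto simp: l_def)
qed

lemma power_length_mult_cnj_prod_list:
  assumes "\<And>x. x \<in> set xs \<Longrightarrow> z * cnj (f x) = h x"
  shows "z ^ length xs * cnj (\<Prod>x\<leftarrow>xs. f x) = (\<Prod>x\<leftarrow>xs. h x)"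
  using assms by (induction xs) (auto simp: mult_ac)

lemma moebius_denominator_factors:
  assumes "norm g = 1" "length rs = length as"
    and "\<And>z. g * (\<Prod>a\<leftarrow>as. z - a) - c * (\<Prod>a\<leftarrow>as. 1 - cnj a * z)
      = l * (\<Prod>r\<leftarrow>rs. z - r)"
    and "l = g - c * (\<Prod>a\<leftarrow>as. - cnj a)"
  shows "(\<Prod>a\<leftarrow>as. 1 - cnj a * z) - g * cnj c * (\<Prod>a\<leftarrow>as. z - a)
       = g * cnj l * (\<Prod>r\<leftarrow>rs. 1 - cnj r * z)"
proof -
  have "g * cnj g = 1"
    using assms(1) complex_norm_square[of g] by simp
  show ?thesis
  proof (cases "z = 0")
    case True
    have "cnj (\<Prod>a\<leftarrow>as. - cnj a) = (\<Prod>a\<leftarrow>as. - a)"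
      using power_length_mult_cnj_prod_list[of as 1 "\<lambda>a. - cnj a" uminus] by simp
    then show ?thesis
      using True \<open>g * cnj g = 1\<close> by (simp add: assms(4) map_replicate_const algebra_simps)
  next
    case False
    define w where "w = inverse (cnj z)"
    let ?n = "length as"
    have refl1: "z * cnj (w - a) = 1 - cnj a * z" and refl2: "z * cnj (1 - cnj a * w) = z - a" for a
      using False by (simp_all add: w_def field_simps)
    have N: "z ^ ?n * cnj (\<Prod>a\<leftarrow>as. w - a) = (\<Prod>a\<leftarrow>as. 1 - cnj a * z)"
      by (rule power_length_mult_cnj_prod_list) (rule refl1)
    have D: "z ^ ?n * cnj (\<Prod>a\<leftarrow>as. 1 - cnj a * w) = (\<Prod>a\<leftarrow>as. z - a)"
      by (rule power_length_mult_cnj_prod_list) (rule refl2)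
    have R: "z ^ ?n * cnj (\<Prod>r\<leftarrow>rs. w - r) = (\<Prod>r\<leftarrow>rs. 1 - cnj r * z)"
      unfolding assms(2)[symmetric] by (rule power_length_mult_cnj_prod_list) (rule refl1)
    have "z ^ ?n * cnj (g * (\<Prod>a\<leftarrow>as. w - a) - c * (\<Prod>a\<leftarrow>as. 1 - cnj a * w))
        = z ^ ?n * cnj (l * (\<Prod>r\<leftarrow>rs. w - r))"
      by (simp only: assms(3))
    then have reflected: "cnj g * (\<Prod>a\<leftarrow>as. 1 - cnj a * z) - cnj c * (\<Prod>a\<leftarrow>as. z - a)
        = cnj l * (\<Prod>r\<leftarrow>rs. 1 - cnj r * z)"
      by (simp only: complex_cnj_diff complex_cnj_mult right_diff_distrib mult.left_commute[of "z ^ ?n"] N D R)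
    have "(\<Prod>a\<leftarrow>as. 1 - cnj a * z) - g * cnj c * (\<Prod>a\<leftarrow>as. z - a)
        = g * (cnj g * (\<Prod>a\<leftarrow>as. 1 - cnj a * z) - cnj c * (\<Prod>a\<leftarrow>as. z - a))"
      by (simp only: right_diff_distrib mult.assoc[symmetric] \<open>g * cnj g = 1\<close> mult_1)
    also have "\<dots> = g * cnj l * (\<Prod>r\<leftarrow>rs. 1 - cnj r * z)"
      by (simp only: reflected mult.assoc)
    finally show ?thesis .
  qed
qed

lemma prod_list_divide: "(\<Prod>x\<leftarrow>xs. f x / h x) = (\<Prod>x\<leftarrow>xs. f x) / (\<Prod>x\<leftarrow>xs. h x)"
  for f h :: "'a \<Rightarrow> 'b :: field"
  by (induction xs) auto

lemma blaschke_factor_comp_blaschke: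
  assumes "norm g = 1" "norm c < 1" "set as \<subseteq> ball 0 1"
  obtains g' rs where "norm g' = 1" "length rs = length as" "set rs \<subseteq> ball 0 1"
    "\<And>z. norm z < 1 \<Longrightarrow> blaschke_factor c (blaschke g as z) = blaschke g' rs z"
proof -
  define l where "l = g - c * (\<Prod>a\<leftarrow>as. - cnj a)"
  have "l \<noteq> 0"
    unfolding l_def using assms by (rule moebius_lead_coeff_nonzero)
  obtain rs where rs: "length rs = length as" "set rs \<subseteq> ball 0 1"
    "\<And>z. g * (\<Prod>a\<leftarrow>as. z - a) - c * (\<Prod>a\<leftarrow>as. 1 - cnj a * z)
      = l * (\<Prod>r\<leftarrow>rs. z - r)"
    unfolding l_def using moebius_numerator_factors[OF assms] by blast
  define g' where "g' = l / (g * cnj l)"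
  have "norm g' = 1"
    using assms(1) \<open>l \<noteq> 0\<close> by (simp add: g'_def norm_divide norm_mult)
  moreover have "blaschke_factor c (blaschke g as z) = blaschke g' rs z" if "norm z < 1" for z
  proof -
    let ?N = "\<Prod>a\<leftarrow>as. z - a" and ?D = "\<Prod>a\<leftarrow>as. 1 - cnj a * z"
    have "?D \<noteq> 0" "(\<Prod>r\<leftarrow>rs. 1 - cnj r * z) \<noteq> 0"
      using assms(3) rs(2) that blaschke_factor_denom_nonzero[of _ z] by (auto simp: prod_list_zero_iff)
    moreover have den: "?D - g * cnj c * ?N = g * cnj l * (\<Prod>r\<leftarrow>rs. 1 - cnj r * z)"
      using assms(1) rs(1,3) l_def by (rule moebius_denominator_factors)
    ultimately have "?D - g * cnj c * ?N \<noteq> 0"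
      using assms(1) \<open>l \<noteq> 0\<close> by auto
    have quotient: "blaschke g as z = g * ?N / ?D"
      by (simp add: blaschke_def prod_list_divide)
    have "blaschke_factor c (blaschke g as z) = (g * ?N - c * ?D) / (?D - g * cnj c * ?N)"
      unfolding quotient using \<open>?D \<noteq> 0\<close> \<open>?D - g * cnj c * ?N \<noteq> 0\<close>
      by (simp add: blaschke_factor_def field_simps)
    also have "\<dots> = l * (\<Prod>r\<leftarrow>rs. z - r) / (g * cnj l * (\<Prod>r\<leftarrow>rs. 1 - cnj r * z))"
      by (simp only: rs(3) den)
    also have "\<dots> = blaschke g' rs z"
      by (simp add: blaschke_def prod_list_divide g'_def)
    finally show ?thesis .
  qed
  ultimately show ?thesis
    using rs(1,2) that by blast
qed

lemma is_blaschke_blaschke_factor_comp: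
  assumes "is_blaschke f d" "norm c < 1"
  shows "is_blaschke (\<lambda>z. blaschke_factor c (f z)) d"
proof -
  obtain g as where g: "norm g = 1" and as: "length as = d" "set as \<subseteq> ball 0 1"
    and f: "\<And>z. z \<in> ball 0 1 \<Longrightarrow> f z = blaschke g as z"
    using assms(1) unfolding is_blaschke_def by blast
  obtain g' rs where "norm g' = 1" "length rs = length as" "set rs \<subseteq> ball 0 1"
    "\<And>z. norm z < 1 \<Longrightarrow> blaschke_factor c (blaschke g as z) = blaschke g' rs z"
    using blaschke_factor_comp_blaschke[OF g assms(2) as(2)] by blast
  then show ?thesis
    unfolding is_blaschke_def using as(1) f by (intro exI[of _ g'] exI[of _ rs]) auto
qed

section \<open>Blaschke products with a single critical value\<close>

lemma is_blaschke_blaschke: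
  "norm g = 1 \<Longrightarrow> set as \<subseteq> ball 0 1 \<Longrightarrow> is_blaschke (blaschke g as) (length as)"
  unfolding is_blaschke_def by blast

lemma critical_values_degree_one:
  assumes "is_blaschke B 1"
  shows "critical_values B = {}"
proof -
  obtain g a where "norm g = 1" "norm a < 1"
    and B: "\<And>z. z \<in> ball 0 1 \<Longrightarrow> B z = g * blaschke_factor a z"
    using assms unfolding is_blaschke_def
    by (auto simp: length_Suc_conv blaschke_Cons blaschke_Nil mult.commute)
  have "deriv B z \<noteq> 0" if z: "z \<in> ball 0 1" for z
  proof -
    have "1 - cnj a * z \<noteq> 0"
      using \<open>norm a < 1\<close> z blaschke_factor_denom_nonzero by simp
    then have "((\<lambda>z. g * blaschke_factor a z) has_field_derivative
        g * ((1 - cnj a * a) / (1 - cnj a * z)^2)) (at z)"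
      by (intro DERIV_cmult has_field_derivative_blaschke_factor)
    then have "(B has_field_derivative g * ((1 - cnj a * a) / (1 - cnj a * z)^2)) (at z)"
      by (rule has_field_derivative_transform_within_open[OF _ open_ball z]) (simp add: B)
    then show ?thesis
      using \<open>norm g = 1\<close> \<open>norm a < 1\<close> z blaschke_factor_deriv_nonzero[of a z]
      by (auto dest: DERIV_imp_deriv)
  qed
  then show ?thesis
    unfolding critical_values_def by auto
qed

lemma deriv_blaschke_factor_comp_eq_0:
  assumes "norm \<gamma> = 1" "set rs \<subseteq> ball 0 1" "norm c < 1" "z \<in> ball 0 1"
    and "deriv (blaschke \<gamma> rs) z = 0"
    and "\<And>z. z \<in> ball 0 1 \<Longrightarrow> f z = blaschke_factor c (blaschke \<gamma> rs z)"
  shows "deriv f z = 0"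
proof -
  have "(blaschke \<gamma> rs has_field_derivative 0) (at z)"
    using holomorphic_derivI[OF blaschke_holomorphic[where g = \<gamma>, OF assms(2)] open_ball assms(4),
        where T = UNIV] assms(5)
    by simp
  moreover have "1 - cnj c * blaschke \<gamma> rs z \<noteq> 0"
    using assms(3,4) norm_blaschke_le_1[OF assms(1,2), of z]
    by (intro blaschke_factor_denom_nonzero) auto
  ultimately have "((\<lambda>z. blaschke_factor c (blaschke \<gamma> rs z)) has_field_derivative 0) (at z)"
    using DERIV_chain2[OF has_field_derivative_blaschke_factor] by fastforce
  then have "(f has_field_derivative 0) (at z)"
    by (rule has_field_derivative_transform_within_open[OF _ open_ball assms(4)]) (simp add: assms(6))
  then show ?thesis
    by (rule DERIV_imp_deriv)
qed

lemma blaschke_with_one_critical_value: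
  assumes "is_blaschke B d" "1 \<le> d" "norm w < 1" "critical_values B \<subseteq> {w}"
  obtains \<gamma> a where "norm \<gamma> = 1" "norm a < 1"
    "\<And>z. z \<in> ball 0 1 \<Longrightarrow> B z = blaschke_factor (- w) (\<gamma> * blaschke_factor a z ^ d)"
proof -
  obtain g as where "norm g = 1" "length as = d" "set as \<subseteq> ball 0 1"
    and B: "\<And>z. z \<in> ball 0 1 \<Longrightarrow> B z = blaschke g as z"
    using assms(1) unfolding is_blaschke_def by blast
  obtain \<gamma> rs where "norm \<gamma> = 1" "length rs = d" "set rs \<subseteq> ball 0 1"
    and G: "\<And>z. norm z < 1 \<Longrightarrow> blaschke_factor w (blaschke g as z) = blaschke \<gamma> rs z"
    using blaschke_factor_comp_blaschke[OF \<open>norm g = 1\<close> assms(3) \<open>set as \<subseteq> ball 0 1\<close>]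
      \<open>length as = d\<close> by metis
  have "as \<noteq> []"
    using \<open>length as = d\<close> assms(2) by auto
  have B_in_disc: "norm (B z) < 1" if "z \<in> ball 0 1" for z
    using that B norm_blaschke_less_1[OF \<open>norm g = 1\<close> \<open>set as \<subseteq> ball 0 1\<close> \<open>as \<noteq> []\<close>]
    by simp
  have BG: "B z = blaschke_factor (- w) (blaschke \<gamma> rs z)" if "z \<in> ball 0 1" for z
    using that B_in_disc[OF that] B G[symmetric] blaschke_factor_inverse[OF assms(3)] by simp
  have "blaschke \<gamma> rs z = 0" if z: "z \<in> ball 0 1" and "deriv (blaschke \<gamma> rs) z = 0" for z
  proof -
    have "norm (- w) < 1"
      using assms(3) by simp
    have "deriv B z = 0"
      using \<open>norm \<gamma> = 1\<close> \<open>set rs \<subseteq> ball 0 1\<close> \<open>norm (- w) < 1\<close> z that(2) BG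
      by (rule deriv_blaschke_factor_comp_eq_0)
    then have "B z \<in> critical_values B"
      unfolding critical_values_def using z B_in_disc[OF z] by auto
    then have "B z = w"
      using assms(4) by blast
    then show ?thesis
      using z B[of z] G[of z] by (simp add: blaschke_factor_def)
  qed
  moreover have "\<gamma> \<noteq> 0"
    using \<open>norm \<gamma> = 1\<close> by auto
  ultimately obtain a where "rs = replicate (length rs) a"
    using blaschke_replicate_if_critical_points_are_zeros[OF \<open>set rs \<subseteq> ball 0 1\<close>] by blast
  then have a: "rs = replicate d a"
    using \<open>length rs = d\<close> by simp
  then have "norm a < 1"
    using \<open>set rs \<subseteq> ball 0 1\<close> assms(2) by (cases d) auto
  then show ?thesis
    using that[of \<gamma> a] \<open>norm \<gamma> = 1\<close> BG by (simp add: a blaschke_replicate)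
qed

lemma blaschke_factor_0 [simp]: "blaschke_factor 0 z = z"
  by (simp add: blaschke_factor_def)

lemma compose_list_Cons: "compose_list (f # fs) z = f (compose_list fs z)"
  by (simp add: compose_list_def)

lemma blaschke_power_decomposition:
  fixes q :: "nat \<Rightarrow> nat"
  assumes "0 < m" "norm \<gamma> = 1" "norm a < 1" "norm c < 1"
  obtains Bs where "\<And>j. j < m \<Longrightarrow> is_blaschke (Bs j) (q j)"
    "\<And>z. blaschke_factor c (\<gamma> * blaschke_factor a z ^ (\<Prod>j<m. q j)) = compose_list (map Bs [0..<m]) z"
proof -
  define Bs where "Bs j = (\<lambda>w. blaschke_factor (if j = 0 then c else 0)
    (blaschke (if j = 0 then \<gamma> else 1) (replicate (q j) (if j = m - 1 then a else 0)) w))" for j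
  have "is_blaschke (blaschke g (replicate n b)) n" if "norm g = 1" "norm b < 1" for g b n
    using is_blaschke_blaschke[of g "replicate n b"] that by (simp add: set_replicate_conv_if)
  then have Bs_blaschke: "is_blaschke (Bs j) (q j)" for j
    unfolding Bs_def using assms(2-4) by (intro is_blaschke_blaschke_factor_comp) auto
  obtain k where m: "m = Suc k"
    using assms(1) gr0_implies_Suc by blast
  have compose: "compose_list (map Bs [i..<m]) z
      = (if i = 0 then blaschke_factor c (\<gamma> * blaschke_factor a z ^ (\<Prod>j\<in>{i..<m}. q j))
         else blaschke_factor a z ^ (\<Prod>j\<in>{i..<m}. q j))" if "i \<le> k" for i z
    using that
  proof (induction i rule: inc_induct)
    case base
    then show ?case
      by (simp add: m compose_list_def Bs_def blaschke_replicate)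
  next
    case (step n)
    have upt: "[n..<m] = n # [Suc n..<m]"
      and prod: "(\<Prod>j\<in>{n..<m}. q j) = q n * (\<Prod>j\<in>{Suc n..<m}. q j)"
      using step.hyps by (auto simp: m upt_conv_Cons prod.atLeast_Suc_lessThan)
    have "n \<noteq> m - 1"
      using step.hyps by (simp add: m)
    then show ?case
      unfolding upt prod using step.IH
      by (simp add: compose_list_Cons Bs_def blaschke_replicate power_mult[symmetric] mult.commute)
  qed
  show ?thesis
    using that[OF Bs_blaschke] compose[of 0] by (simp add: atLeast0LessThan)
qed

theorem corollary4p9:
  fixes B :: "complex \<Rightarrow> complex" and m :: nat and p :: "nat \<Rightarrow> nat"
    and \<sigma> :: "nat \<Rightarrow> nat"
  assumes "\<forall>i<m. p i \<ge> 2"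
    and "is_blaschke B (\<Prod>i<m. p i)"
    and "card (critical_values B) = 1"
    and "\<sigma> permutes {..<m}"
  shows "\<exists>Bs :: nat \<Rightarrow> complex \<Rightarrow> complex.
           (\<forall>j<m. is_blaschke (Bs j) (p (\<sigma> j))) \<and>
           (\<forall>z\<in>ball 0 1. B z = compose_list (map Bs [0..<m]) z)"
proof -
  obtain w where w: "critical_values B = {w}"
    using assms(3) card_1_singletonE by blast
  then have "w \<in> critical_values B"
    by simp
  then have "norm w < 1"
    by (simp add: critical_values_def)
  have "0 < m"
    using assms(2) w critical_values_degree_one by (cases m) auto
  have "0 < (\<Prod>i<m. p i)"
    using assms(1) by (intro prod_pos) force
  then have "1 \<le> (\<Prod>i<m. p i)"
    by linarith
  then obtain \<gamma> a where "norm \<gamma> = 1" "norm a < 1"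
    and B: "\<And>z. z \<in> ball 0 1 \<Longrightarrow>
      B z = blaschke_factor (- w) (\<gamma> * blaschke_factor a z ^ (\<Prod>i<m. p i))"
    using blaschke_with_one_critical_value[OF assms(2) _ \<open>norm w < 1\<close>] w by blast
  moreover have "norm (- w) < 1"
    using \<open>norm w < 1\<close> by simp
  ultimately obtain Bs where "\<And>j. j < m \<Longrightarrow> is_blaschke (Bs j) (p (\<sigma> j))"
    and "\<And>z. blaschke_factor (- w) (\<gamma> * blaschke_factor a z ^ (\<Prod>j<m. p (\<sigma> j)))
      = compose_list (map Bs [0..<m]) z"
    using blaschke_power_decomposition[OF \<open>0 < m\<close>] by metis
  moreover have "(\<Prod>j<m. p (\<sigma> j)) = (\<Prod>i<m. p i)"
    using prod.permute[OF assms(4), of p] by simp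
  ultimately show ?thesis
    using B by auto
qed

end
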